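(* Let $(\mathcal{X},d_0)$ be a compact metric space with $d_0\le1$, let $l\in\mathbb{N}$, $1\le p<\infty$, and let $K:\mathbb{Z}_+\times\mathcal{X}^l\to[0,1]$ be symmetric in its last $l$ arguments and satisfy $$|K(m;u_1,\dots,u_l)-K(m;v_1,\dots,v_l)|\le\frac1l\sum_{i=1}^l d_0(u_i,v_i)$$ for all $m\in\mathbb{Z}_+$ and $u_i,v_i\in\mathcal{X}$. For $\xi=\sum_{i=1}^n\delta_{x_i}$ with $n\ge l$ let $\overline{K}(\xi)=\frac1{\binom nl}\sum_{1\le i_1<\dots<i_l\le n}K(n;x_{i_1},\dots,x_{i_l})$, and define $f:\mathfrak{N}\to[0,1]$ by $$f(\xi)=\Big(\frac1{\binom nl}\sum_{1\le i_1<\dots<i_l\le n}\big|K(n;x_{i_1},\dots,x_{i_l})-\overline{K}(\xi)\big|^p\Big)^{1/p}$$ for such $\xi$, and $f(\xi)=0$ if $|\xi|<l$. Then $|f(\xi)-f(\eta)|\le 2\,d_1^{(p)}(\xi,\eta)$ for all $\xi,\eta\in\mathfrak{N}$.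
   Context: $\mathfrak{N}$ is the space of finite point measures on $\mathcal{X}$; $|\xi|$ is the total mass. $\Pi_n$ is the set of permutations of $\{1,\dots,n\}$. For $\xi=\sum_{i=1}^{|\xi|}\delta_{x_i}$, $\eta=\sum_{i=1}^{|\eta|}\delta_{y_i}$: $d_1^{(p)}(\xi,\eta)=\min_{\pi\in\Pi_n}\big(\frac1n\sum_{i=1}^n d_0(x_i,y_{\pi(i)})^p\big)^{1/p}$ if $|\xi|=|\eta|=n\ge1$, $=1$ if $|\xi|\ne|\eta|$, $=0$ if $|\xi|=|\eta|=0$. *)

theory Defs
  imports "HOL-Analysis.Analysis" "HOL-Library.Multiset" "HOL-Combinatorics.Permutations"
begin

text \<open>Finite point measures on X are finite multisets over X; |xi| = size xi.
  A point measure is enumerated by a list xs with mset xs = xi.\<close>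

definition enum_pts :: "'a multiset \<Rightarrow> 'a list" where
  "enum_pts xi = (SOME xs. mset xs = xi)"

definition lsubsets :: "nat \<Rightarrow> nat \<Rightarrow> nat set set" where
  "lsubsets n l = {S. S \<subseteq> {..<n} \<and> card S = l}"

definition sub_tuple :: "'a list \<Rightarrow> nat set \<Rightarrow> 'a list" where
  "sub_tuple xs S = map (\<lambda>i. xs ! i) (sorted_list_of_set S)"

definition Kbar_list :: "(nat \<Rightarrow> 'a list \<Rightarrow> real) \<Rightarrow> nat \<Rightarrow> 'a list \<Rightarrow> real" where
  "Kbar_list K l xs = (let n = length xs in
     (1 / real (n choose l)) * (\<Sum>S\<in>lsubsets n l. K n (sub_tuple xs S)))"

definition f_list :: "real \<Rightarrow> (nat \<Rightarrow> 'a list \<Rightarrow> real) \<Rightarrow> nat \<Rightarrow> 'a list \<Rightarrow> real" where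
  "f_list p K l xs = (let n = length xs in
     if n < l then 0
     else ((1 / real (n choose l)) *
            (\<Sum>S\<in>lsubsets n l. \<bar>K n (sub_tuple xs S) - Kbar_list K l xs\<bar> powr p)) powr (1 / p))"

definition f_pm :: "real \<Rightarrow> (nat \<Rightarrow> 'a list \<Rightarrow> real) \<Rightarrow> nat \<Rightarrow> 'a multiset \<Rightarrow> real" where
  "f_pm p K l xi = f_list p K l (enum_pts xi)"

definition d1p :: "real \<Rightarrow> 'a::metric_space multiset \<Rightarrow> 'a multiset \<Rightarrow> real" where
  "d1p p xi eta =
    (if size xi \<noteq> size eta then 1
     else if size xi = 0 then 0
     else (let n = size xi; xs = enum_pts xi; ys = enum_pts eta in
       Min ((\<lambda>\<pi>. ((1 / real n) * (\<Sum>i<n. dist (xs ! i) (ys ! \<pi> i) powr p)) powr (1 / p))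
              ` {\<pi>. \<pi> permutes {..<n}})))"

end

theory Submission
  imports Defs
begin

text \<open>Write \<open>k\<^sub>\<xi>(S)\<close> for the value of \<open>K\<close> on the points of \<open>\<xi>\<close> indexed by an \<open>l\<close>-subset \<open>S\<close>,
  so that \<open>f(\<xi>)\<close> is the normalized \<open>\<ell>\<^sup>p\<close> norm over \<open>l\<close>-subsets of \<open>k\<^sub>\<xi>\<close> minus its mean.
  Match the points of \<open>\<xi>\<close> and \<open>\<eta>\<close> by an optimal permutation (symmetry of \<open>K\<close> makes \<open>f\<close>
  independent of the enumeration). By Minkowski's inequality \<open>|f(\<xi>) - f(\<eta>)|\<close> is at most the
  norm of \<open>(k\<^sub>\<xi> - k\<^sub>\<eta>)\<close> minus its mean, hence at most twice the norm of \<open>k\<^sub>\<xi> - k\<^sub>\<eta>\<close>, since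
  a mean is dominated by the \<open>\<ell>\<^sup>p\<close> norm. The Lipschitz condition bounds \<open>|k\<^sub>\<xi>(S) - k\<^sub>\<eta>(S)|\<close>
  by the mean matched distance over \<open>S\<close>; Jensen's inequality and the fact that every index
  lies in equally many \<open>l\<close>-subsets bound the resulting norm by \<open>d\<^sub>1\<^sup>(\<^sup>p\<^sup>)(\<xi>, \<eta>)\<close>.
  Point measures of different sizes are at distance 1, and \<open>f\<close> takes values in \<open>[0, 1]\<close>.\<close>

text \<open>The library lemma \<open>powr_convex\<close> covers only \<open>{0<..}\<close>; the boundary cases are done by hand.\<close>
lemma convex_on_powr_nonneg:
  assumes "p \<ge> 1"
  shows "convex_on {0..} (\<lambda>x::real. x powr p)"
proof (rule convex_onI)
  show "convex {0::real..}" by (rule convex_real_interval)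
  fix x y t :: real
  assume x: "x \<in> {0..}" and y: "y \<in> {0..}" and t: "0 < t" "t < 1"
  have powr_le_self: "s powr p \<le> s" if "0 \<le> s" "s \<le> 1" for s :: real
    using that assms powr_mono'[of 1 p s] by (cases "s = 0") auto
  consider "x > 0" "y > 0" | "x = 0" | "y = 0" using x y by fastforce
  then have "((1 - t) * x + t * y) powr p \<le> (1 - t) * x powr p + t * y powr p"
  proof cases
    case 1
    then show ?thesis using convex_onD[OF powr_convex[OF assms], of t x y] t by auto
  next
    case 2
    have "(t * y) powr p = t powr p * y powr p" using t y by (simp add: powr_mult)
    also have "\<dots> \<le> t * y powr p" using powr_le_self[of t] t by (intro mult_right_mono) auto
    finally show ?thesis using 2 assms by simp
  next
    case 3
    have "((1 - t) * x) powr p = (1 - t) powr p * x powr p" using t x by (simp add: powr_mult)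
    also have "\<dots> \<le> (1 - t) * x powr p" using powr_le_self[of "1 - t"] t by (intro mult_right_mono) auto
    finally show ?thesis using 3 assms by simp
  qed
  then show "((1 - t) *\<^sub>R x + t *\<^sub>R y) powr p \<le> (1 - t) * x powr p + t * y powr p"
    by simp
qed

definition pmean :: "real \<Rightarrow> 'b set \<Rightarrow> ('b \<Rightarrow> real) \<Rightarrow> real" where
  "pmean p I a = ((1 / real (card I)) * (\<Sum>i\<in>I. \<bar>a i\<bar> powr p)) powr (1 / p)"

lemma pmean_nonneg: "pmean p I a \<ge> 0"
  by (simp add: pmean_def)

lemma pmean_powr:
  assumes "p > 0"
  shows "pmean p I a powr p = (1 / real (card I)) * (\<Sum>i\<in>I. \<bar>a i\<bar> powr p)"
  using assms by (simp add: pmean_def powr_powr sum_nonneg)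

lemma pmean_cong: "(\<And>i. i \<in> I \<Longrightarrow> \<bar>a i\<bar> = \<bar>b i\<bar>) \<Longrightarrow> pmean p I a = pmean p I b"
  unfolding pmean_def by (metis (mono_tags, lifting) sum.cong)

lemma pmean_mono:
  assumes "p > 0" and "\<And>i. i \<in> I \<Longrightarrow> \<bar>a i\<bar> \<le> \<bar>b i\<bar>"
  shows "pmean p I a \<le> pmean p I b"
  unfolding pmean_def using assms
  by (intro powr_mono2 mult_left_mono sum_mono) (auto simp: sum_nonneg)

lemma pmean_const:
  assumes "finite I" "I \<noteq> {}" "p > 0"
  shows "pmean p I (\<lambda>_. c) = \<bar>c\<bar>"
  using assms by (simp add: pmean_def powr_powr)

lemma pmean_divide:
  assumes "p > 0" "c > 0"
  shows "pmean p I (\<lambda>i. a i / c) = pmean p I a / c"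
proof -
  define A where "A = (1 / real (card I)) * (\<Sum>i\<in>I. \<bar>a i\<bar> powr p)"
  have "A \<ge> 0" unfolding A_def by (simp add: sum_nonneg)
  have "(1 / real (card I)) * (\<Sum>i\<in>I. \<bar>a i / c\<bar> powr p) = A / c powr p"
    using assms unfolding A_def by (simp add: powr_divide sum_divide_distrib mult.commute)
  then have "pmean p I (\<lambda>i. a i / c) = (A / c powr p) powr (1 / p)"
    unfolding pmean_def by simp
  also have "\<dots> = A powr (1 / p) / (c powr p) powr (1 / p)"
    using \<open>A \<ge> 0\<close> by (simp add: powr_divide)
  also have "\<dots> = pmean p I a / c"
    using assms by (simp add: pmean_def A_def powr_powr)
  finally show ?thesis .
qed

lemma pmean_eq_0D:
  assumes "finite I" "p > 0" "pmean p I a = 0" "i \<in> I"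
  shows "a i = 0"
proof -
  have "(\<Sum>i\<in>I. \<bar>a i\<bar> powr p) = 0"
    using pmean_powr[OF assms(2), of I a] assms by (auto simp: card_gt_0_iff)
  then show ?thesis using assms by (simp add: sum_nonneg_eq_0_iff)
qed

lemma pmean_powr_convex:
  assumes p: "p \<ge> 1" and t: "0 \<le> t" "t \<le> 1"
  shows "pmean p I (\<lambda>i. (1 - t) * \<bar>x i\<bar> + t * \<bar>y i\<bar>) powr p
         \<le> (1 - t) * pmean p I x powr p + t * pmean p I y powr p"
proof -
  have "p > 0" using p by simp
  have "\<bar>(1 - t) * \<bar>x i\<bar> + t * \<bar>y i\<bar>\<bar> powr p \<le> (1 - t) * \<bar>x i\<bar> powr p + t * \<bar>y i\<bar> powr p" for i
    using convex_onD[OF convex_on_powr_nonneg[OF p], of t "\<bar>x i\<bar>" "\<bar>y i\<bar>"] t by simp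
  then have "(1 / real (card I)) * (\<Sum>i\<in>I. \<bar>(1 - t) * \<bar>x i\<bar> + t * \<bar>y i\<bar>\<bar> powr p)
      \<le> (1 / real (card I)) * (\<Sum>i\<in>I. (1 - t) * \<bar>x i\<bar> powr p + t * \<bar>y i\<bar> powr p)"
    by (intro mult_left_mono sum_mono) auto
  also have "\<dots> = (1 - t) * ((1 / real (card I)) * (\<Sum>i\<in>I. \<bar>x i\<bar> powr p))
      + t * ((1 / real (card I)) * (\<Sum>i\<in>I. \<bar>y i\<bar> powr p))"
    unfolding sum.distrib sum_distrib_left[symmetric] by (simp only: algebra_simps)
  finally show ?thesis
    by (simp only: pmean_powr[OF \<open>p > 0\<close>])
qed

lemma pmean_add_le:
  assumes I: "finite I" and p: "p \<ge> 1"
  shows "pmean p I (\<lambda>i. a i + b i) \<le> pmean p I a + pmean p I b"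
proof -
  define A B where AB: "A = pmean p I a" "B = pmean p I b"
  have "p > 0" using p by simp
  consider "A = 0" | "B = 0" | "A > 0" "B > 0"
    using pmean_nonneg[of p I a] pmean_nonneg[of p I b] unfolding AB by fastforce
  then show ?thesis
  proof cases
    case 1
    then have "pmean p I (\<lambda>i. a i + b i) = pmean p I b"
      using pmean_eq_0D[OF I \<open>p > 0\<close>, of a] unfolding AB by (intro pmean_cong) auto
    then show ?thesis using 1 AB by simp
  next
    case 2
    then have "pmean p I (\<lambda>i. a i + b i) = pmean p I a"
      using pmean_eq_0D[OF I \<open>p > 0\<close>, of b] unfolding AB by (intro pmean_cong) auto
    then show ?thesis using 2 AB by simp
  next
    case 3
    define t where "t = B / (A + B)"
    have t: "0 \<le> t" "t \<le> 1" "1 - t = A / (A + B)" using 3 by (auto simp: t_def field_simps)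
    have pointwise: "\<bar>(a i + b i) / (A + B)\<bar> \<le> (1 - t) * \<bar>a i / A\<bar> + t * \<bar>b i / B\<bar>" for i
    proof -
      have "(1 - t) * \<bar>a i / A\<bar> + t * \<bar>b i / B\<bar> = (\<bar>a i\<bar> + \<bar>b i\<bar>) / (A + B)"
        unfolding t(3) using 3 by (simp add: t_def abs_divide add_divide_distrib)
      moreover have "\<bar>(a i + b i) / (A + B)\<bar> \<le> (\<bar>a i\<bar> + \<bar>b i\<bar>) / (A + B)"
        using 3 abs_triangle_ineq[of "a i" "b i"] by (simp add: abs_divide divide_right_mono)
      ultimately show ?thesis by simp
    qed
    have "pmean p I (\<lambda>i. (a i + b i) / (A + B))
        \<le> pmean p I (\<lambda>i. (1 - t) * \<bar>a i / A\<bar> + t * \<bar>b i / B\<bar>)"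
      using \<open>p > 0\<close> order.trans[OF pointwise abs_ge_self] by (rule pmean_mono)
    also have "\<dots> \<le> 1"
    proof -
      have "pmean p I (\<lambda>i. a i / A) = 1" "pmean p I (\<lambda>i. b i / B) = 1"
        using pmean_divide[OF \<open>p > 0\<close>, where I = I and a = a and c = A]
          pmean_divide[OF \<open>p > 0\<close>, where I = I and a = b and c = B] 3 by (simp_all add: AB)
      then have "pmean p I (\<lambda>i. (1 - t) * \<bar>a i / A\<bar> + t * \<bar>b i / B\<bar>) powr p \<le> 1"
        using pmean_powr_convex[OF p t(1,2), of I "\<lambda>i. a i / A" "\<lambda>i. b i / B"] by simp
      then have "(pmean p I (\<lambda>i. (1 - t) * \<bar>a i / A\<bar> + t * \<bar>b i / B\<bar>) powr p) powr (1 / p) \<le> 1"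
        using \<open>p > 0\<close> by (intro powr_le1) auto
      then show ?thesis
        using \<open>p > 0\<close> by (simp add: powr_powr pmean_nonneg)
    qed
    finally show ?thesis
      using 3 pmean_divide[OF \<open>p > 0\<close>, where I = I and a = "\<lambda>i. a i + b i" and c = "A + B"]
      by (simp add: AB divide_le_eq)
  qed
qed

lemma pmean_diff_le:
  assumes "finite I" "p \<ge> 1"
  shows "\<bar>pmean p I a - pmean p I b\<bar> \<le> pmean p I (\<lambda>i. a i - b i)"
proof -
  have "pmean p I a \<le> pmean p I b + pmean p I (\<lambda>i. a i - b i)"
    using pmean_add_le[OF assms, of b "\<lambda>i. a i - b i"] by simp
  moreover have "pmean p I b \<le> pmean p I a + pmean p I (\<lambda>i. b i - a i)"
    using pmean_add_le[OF assms, of a "\<lambda>i. b i - a i"] by simp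
  moreover have "pmean p I (\<lambda>i. b i - a i) = pmean p I (\<lambda>i. a i - b i)"
    by (rule pmean_cong) simp
  ultimately show ?thesis by linarith
qed

lemma mean_le_pmean:
  assumes I: "finite I" "I \<noteq> {}" and p: "p \<ge> 1"
  shows "\<bar>(1 / real (card I)) * (\<Sum>i\<in>I. a i)\<bar> \<le> pmean p I a"
proof -
  have "card I > 0" using I by (simp add: card_gt_0_iff)
  define m where "m = (1 / real (card I)) * (\<Sum>i\<in>I. \<bar>a i\<bar>)"
  have "\<bar>(1 / real (card I)) * (\<Sum>i\<in>I. a i)\<bar> \<le> m"
    unfolding m_def using sum_abs[of a I] by (simp add: abs_mult divide_right_mono)
  moreover have "m powr p \<le> (1 / real (card I)) * (\<Sum>i\<in>I. \<bar>a i\<bar> powr p)"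
  proof -
    have "(\<Sum>i\<in>I. (1 / real (card I)) *\<^sub>R \<bar>a i\<bar>) powr p \<le> (\<Sum>i\<in>I. (1 / real (card I)) * \<bar>a i\<bar> powr p)"
      using \<open>card I > 0\<close> by (intro convex_on_sum[OF I convex_on_powr_nonneg[OF p]]) auto
    then show ?thesis unfolding m_def by (simp add: sum_distrib_left)
  qed
  then have "(m powr p) powr (1 / p) \<le> pmean p I a"
    unfolding pmean_def using p by (intro powr_mono2) auto
  moreover have "(m powr p) powr (1 / p) = m"
    using p by (simp add: m_def powr_powr sum_nonneg)
  ultimately show ?thesis by simp
qed

lemma pmean_centered_diff_le:
  assumes I: "finite I" "I \<noteq> {}" and p: "p \<ge> 1"
  shows "\<bar>pmean p I (\<lambda>i. u i - (1 / real (card I)) * (\<Sum>j\<in>I. u j))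
          - pmean p I (\<lambda>i. v i - (1 / real (card I)) * (\<Sum>j\<in>I. v j))\<bar>
         \<le> 2 * pmean p I (\<lambda>i. u i - v i)"
proof -
  let ?mu = "(1 / real (card I)) * (\<Sum>j\<in>I. u j)" and ?mv = "(1 / real (card I)) * (\<Sum>j\<in>I. v j)"
  define m where "m = (1 / real (card I)) * (\<Sum>j\<in>I. u j - v j)"
  have "m = ?mu - ?mv"
    unfolding m_def by (simp add: sum_subtractf right_diff_distrib)
  then have "(\<lambda>i. (u i - ?mu) - (v i - ?mv)) = (\<lambda>i. (u i - v i) + (- m))"
    by auto
  then have "\<bar>pmean p I (\<lambda>i. u i - ?mu) - pmean p I (\<lambda>i. v i - ?mv)\<bar>
        \<le> pmean p I (\<lambda>i. (u i - v i) + (- m))"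
    using pmean_diff_le[OF I(1) p, of "\<lambda>i. u i - ?mu" "\<lambda>i. v i - ?mv"] by simp
  also have "\<dots> \<le> pmean p I (\<lambda>i. u i - v i) + \<bar>m\<bar>"
    using pmean_add_le[OF I(1) p, of "\<lambda>i. u i - v i" "\<lambda>_. - m"] pmean_const[OF I, of p "- m"] p
    by simp
  also have "\<bar>m\<bar> \<le> pmean p I (\<lambda>i. u i - v i)"
    unfolding m_def by (rule mean_le_pmean[OF assms])
  finally show ?thesis by simp
qed

lemma finite_lsubsets [simp]: "finite (lsubsets n l)"
  unfolding lsubsets_def by (rule finite_subset[of _ "Pow {..<n}"]) auto

lemma card_lsubsets [simp]: "card (lsubsets n l) = n choose l"
  unfolding lsubsets_def using n_subsets[of "{..<n}" l] by simp

lemma lsubsets_nonempty: "l \<le> n \<Longrightarrow> lsubsets n l \<noteq> {}"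
  using card_lsubsets[of n l] by (metis card.empty zero_less_binomial_iff neq0_conv)

lemma lsubsetsD:
  assumes "S \<in> lsubsets n l"
  shows "S \<subseteq> {..<n}" "finite S" "card S = l" "l \<le> n"
  using assms finite_subset[of S "{..<n}"] card_mono[of "{..<n}" S] by (auto simp: lsubsets_def)

lemma card_lsubsets_containing:
  assumes "i < n" "l \<ge> 1"
  shows "card {S \<in> lsubsets n l. i \<in> S} = (n - 1) choose (l - 1)"
proof -
  let ?T = "{T. T \<subseteq> {..<n} - {i} \<and> card T = l - 1}"
  have "{S \<in> lsubsets n l. i \<in> S} = insert i ` ?T"
  proof (intro equalityI subsetI)
    fix S assume S: "S \<in> {S \<in> lsubsets n l. i \<in> S}"
    then have "S = insert i (S - {i})" and "S - {i} \<in> ?T"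
      using lsubsetsD[of S n l] by auto
    then show "S \<in> insert i ` ?T" by blast
  next
    fix S assume "S \<in> insert i ` ?T"
    then obtain T where T: "T \<subseteq> {..<n} - {i}" "card T = l - 1" "S = insert i T" by auto
    then have "finite T" "i \<notin> T" using finite_subset by auto
    then show "S \<in> {S \<in> lsubsets n l. i \<in> S}" using T assms by (auto simp: lsubsets_def)
  qed
  moreover have "inj_on (insert i) ?T"
    by (rule inj_onI) blast
  ultimately have "card {S \<in> lsubsets n l. i \<in> S} = card ?T"
    by (simp add: card_image)
  also have "\<dots> = (n - 1) choose (l - 1)"
    using n_subsets[of "{..<n} - {i}" "l - 1"] assms by simp
  finally show ?thesis .
qed

text \<open>Each index lies in exactly \<open>(n - 1) choose (l - 1)\<close> of the \<open>l\<close>-subsets.\<close>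
lemma mean_lsubsets_mean:
  assumes "1 \<le> l" "l \<le> n"
  shows "(1 / real (n choose l)) * (\<Sum>S\<in>lsubsets n l. (1 / real l) * (\<Sum>i\<in>S. g i))
       = (1 / real n) * (\<Sum>i<n. g i)"
proof -
  have "(\<Sum>S\<in>lsubsets n l. \<Sum>i\<in>S. g i) = (\<Sum>S\<in>lsubsets n l. \<Sum>i\<in>{i. i \<in> {..<n} \<and> i \<in> S}. g i)"
    by (intro sum.cong refl) (auto dest: lsubsetsD)
  also have "\<dots> = (\<Sum>i<n. \<Sum>S\<in>{S. S \<in> lsubsets n l \<and> i \<in> S}. g i)"
    by (rule sum.swap_restrict) auto
  also have "\<dots> = real ((n - 1) choose (l - 1)) * (\<Sum>i<n. g i)"
    using card_lsubsets_containing[OF _ assms(1)] by (simp add: sum_distrib_left)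
  finally have "(\<Sum>S\<in>lsubsets n l. \<Sum>i\<in>S. g i) = real ((n - 1) choose (l - 1)) * (\<Sum>i<n. g i)" .
  moreover have "real l * real (n choose l) = real n * real ((n - 1) choose (l - 1))"
    using times_binomial_minus1_eq[of l n] assms by (metis of_nat_mult less_le_trans zero_less_one)
  moreover have "n choose l > 0" "n > 0" using assms by auto
  ultimately show ?thesis
    by (simp add: sum_distrib_left[symmetric] field_simps flip: sum_divide_distrib)
qed

lemma pmean_lsubsets_means_le:
  assumes l: "1 \<le> l" "l \<le> n" and p: "p \<ge> 1"
  shows "pmean p (lsubsets n l) (\<lambda>S. (1 / real l) * (\<Sum>i\<in>S. g i)) \<le> pmean p {..<n} g"
proof -
  have jensen: "\<bar>(1 / real l) * (\<Sum>i\<in>S. g i)\<bar> powr p \<le> (1 / real l) * (\<Sum>i\<in>S. \<bar>g i\<bar> powr p)"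
    if "S \<in> lsubsets n l" for S
  proof -
    have S: "finite S" "S \<noteq> {}" "card S = l" using lsubsetsD[OF that] l by auto
    have "\<bar>(1 / real l) * (\<Sum>i\<in>S. g i)\<bar> powr p \<le> pmean p S g powr p"
      using mean_le_pmean[OF S(1,2) p, of g] S(3) p by (intro powr_mono2) auto
    then show ?thesis using pmean_powr[of p S g] S(3) p by simp
  qed
  have "(1 / real (card (lsubsets n l))) * (\<Sum>S\<in>lsubsets n l. \<bar>(1 / real l) * (\<Sum>i\<in>S. g i)\<bar> powr p)
      \<le> (1 / real (n choose l)) * (\<Sum>S\<in>lsubsets n l. (1 / real l) * (\<Sum>i\<in>S. \<bar>g i\<bar> powr p))"
    unfolding card_lsubsets using jensen by (intro mult_left_mono sum_mono) auto
  also have "\<dots> = (1 / real (card {..<n})) * (\<Sum>i<n. \<bar>g i\<bar> powr p)"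
    using mean_lsubsets_mean[OF l] by simp
  finally show ?thesis
    unfolding pmean_def using p by (intro powr_mono2) (auto simp: sum_nonneg)
qed

lemma lsubsets_image_permutes:
  assumes "\<sigma> permutes {..<n}"
  shows "bij_betw ((`) \<sigma>) (lsubsets n l) (lsubsets n l)"
proof -
  have inj: "inj \<sigma>" using permutes_inj[OF assms] .
  have "(`) \<sigma> ` lsubsets n l \<subseteq> lsubsets n l"
    using permutes_image[OF assms] inj
    by (auto simp: lsubsets_def card_image inj_on_subset[OF inj])
  moreover have "inj_on ((`) \<sigma>) (lsubsets n l)"
    using inj by (simp add: inj_on_def inj_image_eq_iff)
  ultimately show ?thesis
    by (simp add: bij_betw_def endo_inj_surj)
qed

lemma length_sub_tuple [simp]: "length (sub_tuple xs S) = card S"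
  by (simp add: sub_tuple_def)

lemma set_sub_tuple: "S \<subseteq> {..<length xs} \<Longrightarrow> set (sub_tuple xs S) \<subseteq> set xs"
  using finite_subset[of S "{..<length xs}"] by (auto simp: sub_tuple_def)

lemma mset_sub_tuple: "mset (sub_tuple xs S) = image_mset ((!) xs) (mset_set S)"
  by (metis sub_tuple_def mset_map mset_sorted_list_of_multiset sorted_list_of_mset_set)

lemma sum_sub_tuple_pairs:
  assumes "finite S"
  shows "(\<Sum>j<card S. g (sub_tuple xs S ! j) (sub_tuple ys S ! j)) = (\<Sum>i\<in>S. g (xs ! i) (ys ! i))"
proof -
  let ?L = "sorted_list_of_set S"
  have "(\<Sum>j<card S. g (sub_tuple xs S ! j) (sub_tuple ys S ! j)) = (\<Sum>j<length ?L. g (xs ! (?L ! j)) (ys ! (?L ! j)))"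
    by (simp add: sub_tuple_def)
  also have "\<dots> = sum_list (map (\<lambda>i. g (xs ! i) (ys ! i)) ?L)"
    by (simp add: sum_list_sum_nth atLeast0LessThan)
  also have "\<dots> = (\<Sum>i\<in>S. g (xs ! i) (ys ! i))"
    using assms by (simp add: sum.distinct_set_conv_list[symmetric])
  finally show ?thesis .
qed

lemma mset_sub_tuple_permute_list:
  assumes "\<sigma> permutes {..<length xs}" "S \<subseteq> {..<length xs}"
  shows "mset (sub_tuple (permute_list \<sigma> xs) S) = mset (sub_tuple xs (\<sigma> ` S))"
proof -
  have "image_mset ((!) (permute_list \<sigma> xs)) (mset_set S) = image_mset ((!) xs \<circ> \<sigma>) (mset_set S)"
    using assms finite_subset[OF assms(2)] by (intro image_mset_cong) (auto simp: permute_list_nth)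
  also have "\<dots> = image_mset ((!) xs) (mset_set (\<sigma> ` S))"
    using image_mset_mset_set[OF inj_on_subset[OF permutes_inj[OF assms(1)] subset_UNIV]]
    by (simp flip: image_mset.comp)
  finally show ?thesis by (simp add: mset_sub_tuple)
qed

lemma f_list_eq_pmean:
  assumes "l \<le> length xs"
  shows "f_list p K l xs =
    pmean p (lsubsets (length xs) l) (\<lambda>S. K (length xs) (sub_tuple xs S) - Kbar_list K l xs)"
  using assms by (simp add: f_list_def pmean_def Let_def)

locale symmetric_lipschitz_kernel =
  fixes X :: "'a::metric_space set" and l :: nat and K :: "nat \<Rightarrow> 'a list \<Rightarrow> real"
  assumes l_pos: "l \<ge> 1"
    and K_range: "\<And>m us. m \<ge> 1 \<Longrightarrow> length us = l \<Longrightarrow> set us \<subseteq> X \<Longrightarrow>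
                     0 \<le> K m us \<and> K m us \<le> 1"
    and K_sym: "\<And>m us vs. m \<ge> 1 \<Longrightarrow> length us = l \<Longrightarrow> set us \<subseteq> X \<Longrightarrow>
                     mset vs = mset us \<Longrightarrow> K m vs = K m us"
    and K_lip: "\<And>m us vs. m \<ge> 1 \<Longrightarrow> length us = l \<Longrightarrow> length vs = l \<Longrightarrow>
                     set us \<subseteq> X \<Longrightarrow> set vs \<subseteq> X \<Longrightarrow>
                     \<bar>K m us - K m vs\<bar> \<le> (1 / real l) * (\<Sum>i<l. dist (us ! i) (vs ! i))"
begin

lemma K_sub_tuple_bounds:
  assumes "set xs \<subseteq> X" "S \<in> lsubsets (length xs) l"
  shows "0 \<le> K (length xs) (sub_tuple xs S) \<and> K (length xs) (sub_tuple xs S) \<le> 1"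
proof -
  have "length xs \<ge> 1"
    using lsubsetsD[OF assms(2)] l_pos by simp
  then show ?thesis
    using K_range lsubsetsD[OF assms(2)] set_sub_tuple[of S xs] assms(1) by auto
qed

lemma f_list_bounds:
  assumes "p > 0" "set xs \<subseteq> X"
  shows "0 \<le> f_list p K l xs \<and> f_list p K l xs \<le> 1"
proof (cases "l \<le> length xs")
  case True
  let ?I = "lsubsets (length xs) l"
  have "0 \<le> Kbar_list K l xs \<and> Kbar_list K l xs \<le> 1"
  proof -
    have "0 \<le> (\<Sum>S\<in>?I. K (length xs) (sub_tuple xs S))"
      "(\<Sum>S\<in>?I. K (length xs) (sub_tuple xs S)) \<le> real (card ?I)"
      using K_sub_tuple_bounds[OF assms(2)] sum_bounded_above[of ?I "\<lambda>S. K (length xs) (sub_tuple xs S)" 1]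
      by (auto intro: sum_nonneg)
    then show ?thesis
      using True by (simp add: Kbar_list_def Let_def)
  qed
  have "pmean p ?I (\<lambda>S. K (length xs) (sub_tuple xs S) - Kbar_list K l xs) \<le> pmean p ?I (\<lambda>_. 1)"
    using K_sub_tuple_bounds[OF assms(2)] \<open>0 \<le> Kbar_list K l xs \<and> Kbar_list K l xs \<le> 1\<close>
    by (intro pmean_mono[OF assms(1)]) (fastforce simp: abs_le_iff)
  also have "\<dots> = 1"
    using pmean_const[OF finite_lsubsets lsubsets_nonempty[OF True] assms(1)] by simp
  finally show ?thesis
    using f_list_eq_pmean[OF True] pmean_nonneg by simp
qed (simp add: f_list_def)

lemma sum_lsubsets_permute_list:
  assumes \<sigma>: "\<sigma> permutes {..<length xs}" and X: "set xs \<subseteq> X"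
  shows "(\<Sum>S\<in>lsubsets (length xs) l. h (K (length xs) (sub_tuple (permute_list \<sigma> xs) S)))
       = (\<Sum>S\<in>lsubsets (length xs) l. h (K (length xs) (sub_tuple xs S)))"
    (is "(\<Sum>S\<in>?I. _) = _")
proof -
  have "K (length xs) (sub_tuple (permute_list \<sigma> xs) S) = K (length xs) (sub_tuple xs (\<sigma> ` S))"
    if S: "S \<in> ?I" for S
  proof -
    have \<sigma>S: "\<sigma> ` S \<in> ?I"
      by (rule bij_betw_apply[OF lsubsets_image_permutes[OF \<sigma>] S])
    have "length xs \<ge> 1" using lsubsetsD(4)[OF S] l_pos by simp
    moreover have "length (sub_tuple xs (\<sigma> ` S)) = l" using lsubsetsD(3)[OF \<sigma>S] by simp
    moreover have "set (sub_tuple xs (\<sigma> ` S)) \<subseteq> X" using set_sub_tuple[OF lsubsetsD(1)[OF \<sigma>S]] X by simp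
    ultimately show ?thesis
      using K_sym mset_sub_tuple_permute_list[OF \<sigma> lsubsetsD(1)[OF S]] by blast
  qed
  then have "(\<Sum>S\<in>?I. h (K (length xs) (sub_tuple (permute_list \<sigma> xs) S)))
      = (\<Sum>S\<in>?I. h (K (length xs) (sub_tuple xs (\<sigma> ` S))))"
    by (intro sum.cong) auto
  also have "\<dots> = (\<Sum>S\<in>?I. h (K (length xs) (sub_tuple xs S)))"
    by (rule sum.reindex_bij_betw[OF lsubsets_image_permutes[OF \<sigma>]])
  finally show ?thesis .
qed

lemma f_list_permute_list:
  assumes "\<sigma> permutes {..<length xs}" "set xs \<subseteq> X"
  shows "f_list p K l (permute_list \<sigma> xs) = f_list p K l xs"
proof -
  have "Kbar_list K l (permute_list \<sigma> xs) = Kbar_list K l xs"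
    using sum_lsubsets_permute_list[OF assms, of "\<lambda>x. x"] by (simp add: Kbar_list_def)
  then show ?thesis
    using sum_lsubsets_permute_list[OF assms, of "\<lambda>x. \<bar>x - Kbar_list K l xs\<bar> powr p"]
    by (simp add: f_list_def Let_def)
qed

lemma f_list_diff_le:
  assumes p: "p \<ge> 1" and len: "length xs = n" "length ys = n"
    and X: "set xs \<subseteq> X" "set ys \<subseteq> X"
  shows "\<bar>f_list p K l xs - f_list p K l ys\<bar>
         \<le> 2 * ((1 / real n) * (\<Sum>i<n. dist (xs ! i) (ys ! i) powr p)) powr (1 / p)"
proof (cases "l \<le> n")
  case True
  let ?I = "lsubsets n l"
  have I: "finite ?I" "?I \<noteq> {}" using lsubsets_nonempty[OF True] by auto
  have Kbar: "Kbar_list K l zs = (1 / real (card ?I)) * (\<Sum>S\<in>?I. K n (sub_tuple zs S))"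
    if "length zs = n" for zs
    using that by (simp add: Kbar_list_def)
  have K_diff: "\<bar>K n (sub_tuple xs S) - K n (sub_tuple ys S)\<bar> \<le> \<bar>(1 / real l) * (\<Sum>i\<in>S. dist (xs ! i) (ys ! i))\<bar>"
    if S: "S \<in> ?I" for S
  proof -
    have "\<bar>K n (sub_tuple xs S) - K n (sub_tuple ys S)\<bar>
        \<le> (1 / real l) * (\<Sum>j<l. dist (sub_tuple xs S ! j) (sub_tuple ys S ! j))"
      using K_lip lsubsetsD[OF S] l_pos set_sub_tuple[of S xs] set_sub_tuple[of S ys] len X by simp
    also have "\<dots> = (1 / real l) * (\<Sum>i\<in>S. dist (xs ! i) (ys ! i))"
      using sum_sub_tuple_pairs[OF lsubsetsD(2)[OF S], of dist xs ys] lsubsetsD(3)[OF S] by simp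
    finally show ?thesis by (simp add: sum_nonneg)
  qed
  have "\<bar>f_list p K l xs - f_list p K l ys\<bar> \<le> 2 * pmean p ?I (\<lambda>S. K n (sub_tuple xs S) - K n (sub_tuple ys S))"
    using pmean_centered_diff_le[OF I p] f_list_eq_pmean[of l xs] f_list_eq_pmean[of l ys] True len Kbar
    by simp
  also have "\<dots> \<le> 2 * pmean p ?I (\<lambda>S. (1 / real l) * (\<Sum>i\<in>S. dist (xs ! i) (ys ! i)))"
    using K_diff p by (simp add: pmean_mono)
  also have "\<dots> \<le> 2 * pmean p {..<n} (\<lambda>i. dist (xs ! i) (ys ! i))"
    using pmean_lsubsets_means_le[OF l_pos True p] by simp
  finally show ?thesis by (simp add: pmean_def)
qed (use len in \<open>simp add: f_list_def\<close>)

end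

lemma mset_enum_pts: "mset (enum_pts xi) = xi"
  unfolding enum_pts_def by (rule someI_ex) (rule ex_mset)

lemma d1p_eq_permutation:
  assumes "size xi = size eta"
  obtains \<sigma> where "\<sigma> permutes {..<size xi}"
    and "d1p p xi eta = ((1 / real (size xi)) * (\<Sum>i<size xi.
           dist (enum_pts xi ! i) (permute_list \<sigma> (enum_pts eta) ! i) powr p)) powr (1 / p)"
proof -
  let ?n = "size xi" and ?xs = "enum_pts xi" and ?ys = "enum_pts eta"
  define D where "D \<sigma> = ((1 / real ?n) * (\<Sum>i<?n. dist (?xs ! i) (?ys ! \<sigma> i) powr p)) powr (1 / p)" for \<sigma>
  have "length ?ys = ?n"
    using assms arg_cong[OF mset_enum_pts[of eta], of size] by simp
  then have D_eq: "D \<sigma> = ((1 / real ?n) * (\<Sum>i<?n. dist (?xs ! i) (permute_list \<sigma> ?ys ! i) powr p)) powr (1 / p)"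
    if "\<sigma> permutes {..<?n}" for \<sigma>
    unfolding D_def using that by (simp add: permute_list_nth)
  show ?thesis
  proof (cases "?n = 0")
    case True
    then show ?thesis
      using that[OF permutes_id] D_eq[OF permutes_id] assms by (simp add: d1p_def D_def)
  next
    case False
    let ?P = "{\<sigma>. \<sigma> permutes {..<?n}}"
    have "D ` ?P \<noteq> {}" using permutes_id by blast
    then have "Min (D ` ?P) \<in> D ` ?P"
      using finite_permutations[of "{..<?n}"] by (intro Min_in) auto
    then obtain \<sigma> where "\<sigma> permutes {..<?n}" "d1p p xi eta = D \<sigma>"
      using False assms by (auto simp: d1p_def D_def Let_def)
    then show ?thesis using that D_eq by simp
  qed
qed

theorem proposition2:
  fixes X :: "'a::metric_space set"
    and l :: nat and p :: real
    and K :: "nat \<Rightarrow> 'a list \<Rightarrow> real"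
  assumes X_compact: "compact X"
    and d0_le1: "\<forall>x\<in>X. \<forall>y\<in>X. dist x y \<le> 1"
    and l_pos: "l \<ge> 1"
    and p_ge1: "p \<ge> 1"
    and K_range: "\<And>m us. m \<ge> 1 \<Longrightarrow> length us = l \<Longrightarrow> set us \<subseteq> X \<Longrightarrow>
                     0 \<le> K m us \<and> K m us \<le> 1"
    and K_sym: "\<And>m us vs. m \<ge> 1 \<Longrightarrow> length us = l \<Longrightarrow> set us \<subseteq> X \<Longrightarrow>
                     mset vs = mset us \<Longrightarrow> K m vs = K m us"
    and K_lip: "\<And>m us vs. m \<ge> 1 \<Longrightarrow> length us = l \<Longrightarrow> length vs = l \<Longrightarrow>
                     set us \<subseteq> X \<Longrightarrow> set vs \<subseteq> X \<Longrightarrow>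
                     \<bar>K m us - K m vs\<bar> \<le> (1 / real l) * (\<Sum>i<l. dist (us ! i) (vs ! i))"
    and xi_X: "set_mset xi \<subseteq> X"
    and eta_X: "set_mset eta \<subseteq> X"
  shows "\<bar>f_pm p K l xi - f_pm p K l eta\<bar> \<le> 2 * d1p p xi eta"
proof -
  interpret symmetric_lipschitz_kernel X l K
    using l_pos K_range K_sym K_lip by unfold_locales
  let ?xs = "enum_pts xi" and ?ys = "enum_pts eta"
  have len: "length ?xs = size xi" "length ?ys = size eta"
    and X: "set ?xs \<subseteq> X" "set ?ys \<subseteq> X"
    using mset_enum_pts[of xi] mset_enum_pts[of eta] xi_X eta_X
    by (metis size_mset set_mset_mset)+
  show ?thesis
  proof (cases "size xi = size eta")
    case False
    then show ?thesis
      using f_list_bounds[OF _ X(1), of p] f_list_bounds[OF _ X(2), of p] p_ge1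
      by (auto simp: f_pm_def d1p_def)
  next
    case True
    then obtain \<sigma> where \<sigma>: "\<sigma> permutes {..<size xi}"
      and d1p: "d1p p xi eta = ((1 / real (size xi)) * (\<Sum>i<size xi.
                  dist (?xs ! i) (permute_list \<sigma> ?ys ! i) powr p)) powr (1 / p)"
      by (rule d1p_eq_permutation)
    have "f_pm p K l eta = f_list p K l (permute_list \<sigma> ?ys)"
      using f_list_permute_list[of \<sigma> ?ys p] \<sigma> True len X by (simp add: f_pm_def)
    then show ?thesis
      unfolding d1p using f_list_diff_le[OF p_ge1 len(1), of "permute_list \<sigma> ?ys"] True len X \<sigma>
      by (simp add: f_pm_def)
  qed
qed

end
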